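(* Let $\gamma$ be a basic $\ell$-cover of a matroid $\mathcal{M}$ on $[n]$, let $N_\gamma=\prod_i x_i^{\gamma(i)}$ and let $N_\gamma=N_1\cdots N_s$ be its standard form. Set $\gamma_i:=\gamma_{N_i}$ for $1\le i\le s$, $\gamma_{s+1}:=0$, and $\gamma_0:=\gamma_{x_{[n]}}$ (the constant function $1$). Then $$\mathcal{M}(\gamma)=\bigoplus_{i=0}^{s}\mathcal{M}(\gamma)|_{\operatorname{supp}\gamma_i-\operatorname{supp}\gamma_{i+1}}.$$ Hence $\mathcal{M}(\gamma)=\mathcal{M}(\gamma)^0\oplus\mathcal{M}(\gamma)^+$, where $\mathcal{M}(\gamma)^0:=\mathcal{M}(\gamma)|_{[n]-\operatorname{supp}\gamma}$ and $\mathcal{M}(\gamma)^+:=\mathcal{M}(\gamma)|_{\operatorname{supp}\gamma}=\bigoplus_{i=1}^s\mathcal{M}(\gamma)|_{\operatorname{supp}\gamma_i-\operatorname{supp}\gamma_{i+1}}$. In particular, every basis $F$ of $\mathcal{M}(\gamma)^+$ satisfies $F\subseteq\operatorname{supp}\gamma$ and $\gamma(F)=\ell$, and $\gamma(G)=0$ for every basis $G$ of $\mathcal{M}(\gamma)^0$.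
   Context: Matroids are identified with their independence complexes. For $\gamma:[n]\to\mathbb{N}_0$ and $S\subseteq[n]$, $\gamma(S)=\sum_{i\in S}\gamma(i)$, $\operatorname{supp}\gamma=\{i:\gamma(i)>0\}$. $\gamma$ is an $\ell$-cover of $\mathcal{M}$ if $\gamma(F)\ge\ell$ for every basis $F$, basic if minimal among $\ell$-covers in the pointwise order. $\mathcal{M}(\gamma)$ (the focal matroid) is the complex generated by the bases $F$ with $\gamma(F)=\ell$; it is a matroid. For a monomial $N=\prod x_i^{a_i}$, $\gamma_N(i)=a_i$; $x_{[n]}=x_1\cdots x_n$. The standard form of a monomial $N$ is the unique factorization $N=N_1\cdots N_s$ into squarefree monomials $N_i\neq1$ with $\operatorname{supp}N_1\supseteq\cdots\supseteq\operatorname{supp}N_s$. $\mathcal{M}|_A$ is the restriction to $A$ (independent sets of $\mathcal{M}$ contained in $A$), and $\oplus$ is the direct sum of matroids on disjoint ground sets. *)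

theory Defs
  imports Main
begin

(* Ground set [n] = {1..n}; a matroid is identified with its independence complex. *)
definition matroid :: "nat set \<Rightarrow> nat set set \<Rightarrow> bool" where
  "matroid E M \<longleftrightarrow> finite E \<and> M \<subseteq> Pow E \<and> {} \<in> M
     \<and> (\<forall>X\<in>M. \<forall>Y. Y \<subseteq> X \<longrightarrow> Y \<in> M)
     \<and> (\<forall>X\<in>M. \<forall>Y\<in>M. card X < card Y \<longrightarrow> (\<exists>y\<in>Y - X. insert y X \<in> M))"

definition bases :: "nat set set \<Rightarrow> nat set set" where
  "bases M = {B \<in> M. \<forall>X\<in>M. B \<subseteq> X \<longrightarrow> X = B}"

definition supp :: "(nat \<Rightarrow> nat) \<Rightarrow> nat set" where
  "supp \<gamma> = {i. \<gamma> i > 0}"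

(* gamma : [n] -> N_0, represented as a function nat => nat vanishing outside [n] *)
definition is_cover :: "nat \<Rightarrow> nat set set \<Rightarrow> nat \<Rightarrow> (nat \<Rightarrow> nat) \<Rightarrow> bool" where
  "is_cover n M l \<gamma> \<longleftrightarrow> (\<forall>i. i \<notin> {1..n} \<longrightarrow> \<gamma> i = 0)
     \<and> (\<forall>F\<in>bases M. sum \<gamma> F \<ge> l)"

definition basic_cover :: "nat \<Rightarrow> nat set set \<Rightarrow> nat \<Rightarrow> (nat \<Rightarrow> nat) \<Rightarrow> bool" where
  "basic_cover n M l \<gamma> \<longleftrightarrow> is_cover n M l \<gamma>
     \<and> (\<forall>\<delta>. is_cover n M l \<delta> \<and> \<delta> \<le> \<gamma> \<longrightarrow> \<delta> = \<gamma>)"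

(* the focal matroid M(gamma): complex generated by bases F with gamma(F) = l *)
definition focal :: "nat set set \<Rightarrow> nat \<Rightarrow> (nat \<Rightarrow> nat) \<Rightarrow> nat set set" where
  "focal M l \<gamma> = {I. \<exists>F\<in>bases M. sum \<gamma> F = l \<and> I \<subseteq> F}"

definition restr :: "nat set set \<Rightarrow> nat set \<Rightarrow> nat set set" where
  "restr M A = {I \<in> M. I \<subseteq> A}"

definition dsum :: "nat set \<Rightarrow> (nat \<Rightarrow> nat set set) \<Rightarrow> nat set set" where
  "dsum K C = {\<Union>i\<in>K. X i | X. \<forall>i\<in>K. X i \<in> C i}"

definition dsum2 :: "nat set set \<Rightarrow> nat set set \<Rightarrow> nat set set" where
  "dsum2 A B = {X \<union> Y | X Y. X \<in> A \<and> Y \<in> B}"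

(* Standard form N_gamma = N_1 ... N_s: the squarefree monomial N_i <> 1 is represented
   by its (nonempty) support As!(i-1) \<subseteq> [n]; supports are decreasing, and the
   product has exponent vector gamma. *)
definition standard_form :: "nat \<Rightarrow> (nat \<Rightarrow> nat) \<Rightarrow> nat set list \<Rightarrow> bool" where
  "standard_form n \<gamma> As \<longleftrightarrow> (\<forall>A\<in>set As. A \<noteq> {} \<and> A \<subseteq> {1..n})
     \<and> (\<forall>i j. i < j \<and> j < length As \<longrightarrow> As ! j \<subseteq> As ! i)
     \<and> (\<forall>x. \<gamma> x = card {i. i < length As \<and> x \<in> As ! i})"

end

theory Submission
  imports Defs
begin

(* Since gamma is an l-cover, the bases F with gamma(F) = l are minimum-weight bases, and by the
   greedy exchange argument each of them meets every sublevel set {gamma <= k} in a basis of that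
   set. Conversely any basis with this property for all k has the same weight, as its weight is
   determined by the ranks of the sublevel sets. Given independent sets X_i of M(gamma) inside the
   level sets {gamma = i}, such a basis containing all X_i is built level by level, because two
   bases of {gamma <= k} admit the same independent extensions by subsets of {gamma = k + 1}.
   So M(gamma) is closed under unions across levels, i.e. it is the direct sum of its restrictions
   to the levels; these are the differences supp gamma_i - supp gamma_(i+1) of the standard form. *)

lemma sum_eq_sum_card_less:
  fixes \<gamma> :: "'a \<Rightarrow> nat"
  assumes "finite D" "\<forall>x\<in>D. \<gamma> x \<le> s"
  shows "sum \<gamma> D = (\<Sum>j<s. card {x\<in>D. j < \<gamma> x})"
proof -
  have count: "(\<Sum>j<s. if j < g then 1 else 0) = min g s" for g :: nat
    by (induction s) auto
  have "sum \<gamma> D = (\<Sum>x\<in>D. \<Sum>j<s. if j < \<gamma> x then 1 else 0)"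
    using assms(2) by (intro sum.cong) (auto simp: count min_def)
  also have "\<dots> = (\<Sum>j<s. \<Sum>x\<in>D. if j < \<gamma> x then 1 else 0)"
    by (rule sum.swap)
  also have "\<dots> = (\<Sum>j<s. card {x\<in>D. j < \<gamma> x})"
    using assms(1) by (simp add: sum.inter_filter[symmetric])
  finally show ?thesis .
qed

lemma sum_le_sum_decrement:
  fixes \<gamma> :: "'a \<Rightarrow> nat"
  assumes "finite F"
  shows "sum \<gamma> F \<le> sum (\<gamma>(i := \<gamma> i - 1)) F + 1"
proof (cases "i \<in> F")
  case True
  then show ?thesis
    using sum.remove[OF assms True, of \<gamma>] sum.remove[OF assms True, of "\<gamma>(i := \<gamma> i - 1)"] by simp
next
  case False
  then have "sum (\<gamma>(i := \<gamma> i - 1)) F = sum \<gamma> F" by (intro sum.cong) auto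
  then show ?thesis by simp
qed

lemma downward_closed_eq_lessThan_card:
  fixes J :: "nat set"
  assumes "finite J" and down: "\<And>i j. i \<in> J \<Longrightarrow> j \<le> i \<Longrightarrow> j \<in> J"
  shows "J = {..<card J}"
proof (cases "J = {}")
  case False
  have J: "J = {..Max J}"
    using Max_ge[OF \<open>finite J\<close>] down[OF Max_in[OF \<open>finite J\<close> False]] by auto
  then have "card J = Suc (Max J)" by (metis card_atMost)
  then show ?thesis using J by (simp add: lessThan_Suc_atMost)
qed simp

lemma dsum_insert:
  assumes "k \<notin> K"
  shows "dsum (insert k K) C = dsum2 (C k) (dsum K C)"
proof
  show "dsum (insert k K) C \<subseteq> dsum2 (C k) (dsum K C)"
    unfolding dsum_def dsum2_def by blast
  show "dsum2 (C k) (dsum K C) \<subseteq> dsum (insert k K) C"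
  proof
    fix Y assume "Y \<in> dsum2 (C k) (dsum K C)"
    then obtain A X where Y: "Y = A \<union> (\<Union>i\<in>K. X i)" "A \<in> C k" "\<forall>i\<in>K. X i \<in> C i"
      unfolding dsum_def dsum2_def by blast
    have "Y = (\<Union>i\<in>insert k K. (X(k := A)) i)" using Y(1) assms by auto
    moreover have "\<forall>i\<in>insert k K. (X(k := A)) i \<in> C i" using Y(2,3) by simp
    ultimately show "Y \<in> dsum (insert k K) C" unfolding dsum_def by blast
  qed
qed

lemma restr_UN_eq_dsum:
  assumes closed: "\<And>X. \<forall>i\<in>K. X i \<in> N \<and> X i \<subseteq> L i \<Longrightarrow> (\<Union>i\<in>K. X i) \<in> N"
    and down: "\<And>I J. I \<in> N \<Longrightarrow> J \<subseteq> I \<Longrightarrow> J \<in> N" and "{} \<in> N" and "K' \<subseteq> K"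
  shows "restr N (\<Union>i\<in>K'. L i) = dsum K' (\<lambda>i. restr N (L i))"
proof
  show "restr N (\<Union>i\<in>K'. L i) \<subseteq> dsum K' (\<lambda>i. restr N (L i))"
  proof
    fix I assume I: "I \<in> restr N (\<Union>i\<in>K'. L i)"
    then have "I = (\<Union>i\<in>K'. I \<inter> L i)" unfolding restr_def by blast
    moreover have "\<forall>i\<in>K'. I \<inter> L i \<in> restr N (L i)"
      using I down unfolding restr_def by blast
    ultimately show "I \<in> dsum K' (\<lambda>i. restr N (L i))" unfolding dsum_def by blast
  qed
  show "dsum K' (\<lambda>i. restr N (L i)) \<subseteq> restr N (\<Union>i\<in>K'. L i)"
  proof
    fix Y assume "Y \<in> dsum K' (\<lambda>i. restr N (L i))"
    then obtain X where Y: "Y = (\<Union>i\<in>K'. X i)" "\<forall>i\<in>K'. X i \<in> N \<and> X i \<subseteq> L i"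
      unfolding dsum_def restr_def by blast
    define Z where "Z i = (if i \<in> K' then X i else {})" for i
    have "Y = (\<Union>i\<in>K. Z i)" using Y(1) \<open>K' \<subseteq> K\<close> unfolding Z_def by auto
    moreover have "(\<Union>i\<in>K. Z i) \<in> N" using Y(2) \<open>{} \<in> N\<close> unfolding Z_def by (intro closed) auto
    ultimately show "Y \<in> restr N (\<Union>i\<in>K'. L i)" using Y unfolding restr_def by blast
  qed
qed

lemma bases_restr_compl_supp:
  assumes "G \<in> bases (restr N (A - supp \<gamma>))"
  shows "sum \<gamma> G = 0"
proof -
  have "G \<subseteq> A - supp \<gamma>" using assms unfolding bases_def restr_def by blast
  then show ?thesis unfolding supp_def by (intro sum.neutral) auto
qed

locale matroid_on =
  fixes E :: "nat set" and M :: "nat set set"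
  assumes matroid: "matroid E M"
begin

lemma indep_subset_ground: "X \<in> M \<Longrightarrow> X \<subseteq> E"
  using matroid unfolding matroid_def by blast

lemma indep_finite: "X \<in> M \<Longrightarrow> finite X"
  using matroid indep_subset_ground unfolding matroid_def by (meson finite_subset)

lemma indep_subset: "X \<in> M \<Longrightarrow> Y \<subseteq> X \<Longrightarrow> Y \<in> M"
  using matroid unfolding matroid_def by blast

lemma indep_augment: "X \<in> M \<Longrightarrow> Y \<in> M \<Longrightarrow> card X < card Y \<Longrightarrow> \<exists>y\<in>Y - X. insert y X \<in> M"
  using matroid unfolding matroid_def by blast

lemma empty_indep: "{} \<in> M"
  using matroid unfolding matroid_def by blast

lemma finite_indeps: "finite M"
  using matroid unfolding matroid_def by (meson finite_Pow_iff finite_subset)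

lemma basis_indep: "B \<in> bases M \<Longrightarrow> B \<in> M"
  unfolding bases_def by blast

lemma augment_to_card:
  assumes "A \<in> M" "X \<in> M"
  shows "\<exists>Z \<subseteq> X - A. A \<union> Z \<in> M \<and> card X \<le> card (A \<union> Z)"
  using assms(1)
proof (induction "card X - card A" arbitrary: A rule: less_induct)
  case less
  show ?case
  proof (cases "card X \<le> card A")
    case True
    then show ?thesis using less.prems by (intro exI[of _ "{}"]) auto
  next
    case False
    then obtain y where y: "y \<in> X - A" "insert y A \<in> M"
      using indep_augment[OF less.prems \<open>X \<in> M\<close>] by auto
    then have "card X - card (insert y A) < card X - card A"
      using False indep_finite[OF less.prems] by simp
    from less.hyps[OF this y(2)] obtain Z where
      "Z \<subseteq> X - insert y A" "insert y A \<union> Z \<in> M" "card X \<le> card (insert y A \<union> Z)"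
      by blast
    then show ?thesis using y by (intro exI[of _ "insert y Z"]) auto
  qed
qed

definition basis_of :: "nat set \<Rightarrow> nat set \<Rightarrow> bool" where
  "basis_of U A \<longleftrightarrow> A \<in> M \<and> A \<subseteq> U \<and> (\<forall>w\<in>U - A. insert w A \<notin> M)"

lemma basis_of_card_le:
  assumes "basis_of U A" "W \<in> M" "W \<subseteq> U"
  shows "card W \<le> card A"
proof (rule ccontr)
  assume "\<not> card W \<le> card A"
  then obtain y where "y \<in> W - A" "insert y A \<in> M"
    using indep_augment[OF _ assms(2), of A] assms(1) unfolding basis_of_def by auto
  then show False using assms unfolding basis_of_def by auto
qed

lemma basis_of_card_eq: "basis_of U A \<Longrightarrow> basis_of U B \<Longrightarrow> card A = card B"
  using basis_of_card_le unfolding basis_of_def by (meson le_antisym)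

lemma basis_of_if_card_ge:
  assumes "basis_of U A" "D \<in> M" "D \<subseteq> U" "card A \<le> card D"
  shows "basis_of U D"
  unfolding basis_of_def
proof (intro conjI ballI notI assms(2,3))
  fix w assume w: "w \<in> U - D" "insert w D \<in> M"
  then have "card (insert w D) \<le> card A"
    using basis_of_card_le[OF assms(1) w(2)] assms(3) by blast
  then show False using w assms(4) indep_finite[OF assms(2)] by simp
qed

lemma bases_iff_basis_of: "B \<in> bases M \<longleftrightarrow> basis_of E B"
proof
  assume "B \<in> bases M"
  then show "basis_of E B"
    unfolding bases_def basis_of_def using indep_subset_ground by blast
next
  assume B: "basis_of E B"
  have "X = B" if X: "X \<in> M" "B \<subseteq> X" for X
  proof (rule ccontr)
    assume "X \<noteq> B"
    then obtain w where "w \<in> X - B" using X(2) by blast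
    moreover have "insert w B \<in> M"
      using indep_subset[OF X(1)] X(2) \<open>w \<in> X - B\<close> by blast
    ultimately show False
      using B indep_subset_ground[OF X(1)] unfolding basis_of_def by blast
  qed
  then show "B \<in> bases M" using B unfolding bases_def basis_of_def by blast
qed

lemma exists_basis: "\<exists>B. B \<in> bases M"
proof -
  obtain B where "B \<in> M" "\<forall>X\<in>M. B \<subseteq> X \<longrightarrow> B = X"
    using finite_has_maximal[OF finite_indeps] empty_indep by (metis empty_iff)
  then show ?thesis unfolding bases_def by blast
qed

lemma basis_exchange:
  assumes C: "C \<in> bases M" and Y: "Y \<in> M" and y: "y \<in> Y - C"
  shows "\<exists>x\<in>C - Y. insert y (C - {x}) \<in> bases M"
proof -
  have CM: "C \<in> M" using C by (rule basis_indep)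
  have fC: "finite C" using CM by (rule indep_finite)
  have "insert y (C \<inter> Y) \<in> M" using y by (intro indep_subset[OF Y]) auto
  from augment_to_card[OF this CM] obtain Z where Z: "Z \<subseteq> C" "insert y (C \<inter> Y) \<union> Z \<in> M"
      "card C \<le> card (insert y (C \<inter> Y) \<union> Z)"
    by blast
  define W where "W = insert y (C \<inter> Y) \<union> Z"
  have W: "W \<in> M" "card C \<le> card W" "y \<in> W" "C \<inter> Y \<subseteq> W" "W \<subseteq> insert y C"
    using Z unfolding W_def by auto
  have "insert y C \<notin> M" using C y unfolding bases_def by blast
  then have "W \<subset> insert y C" using W(1,5) by auto
  then obtain x where "x \<in> insert y C - W" using psubset_imp_ex_mem by blast
  then have x: "x \<in> C - Y" "x \<notin> W" using W(3,4) by auto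
  have "card (insert y (C - {x})) = Suc (card (C - {x}))" using y fC by simp
  also have "\<dots> = card C" using x by (intro card_Suc_Diff1[OF fC]) blast
  finally have "card (insert y (C - {x})) = card C" .
  moreover have "W \<subseteq> insert y (C - {x})" using x(2) W(5) by blast
  ultimately have "W = insert y (C - {x})"
    using W(2) fC by (intro card_seteq) simp_all
  moreover have "basis_of E W"
    using basis_of_if_card_ge[OF _ W(1) indep_subset_ground[OF W(1)] W(2)] C
    unfolding bases_iff_basis_of .
  ultimately show ?thesis using x unfolding bases_iff_basis_of by blast
qed

lemma basis_of_Un_indep:
  assumes A: "basis_of U A" and A': "basis_of U A'" and Q: "Q \<inter> U = {}" and AQ: "A \<union> Q \<in> M"
  shows "A' \<union> Q \<in> M"
proof -
  have A'M: "A' \<in> M" using A' unfolding basis_of_def by simp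
  from augment_to_card[OF A'M AQ] obtain Z where
    Z: "Z \<subseteq> (A \<union> Q) - A'" "A' \<union> Z \<in> M" "card (A \<union> Q) \<le> card (A' \<union> Z)"
    by blast
  have "Z \<inter> A = {}"
  proof (rule ccontr)
    assume "Z \<inter> A \<noteq> {}"
    then obtain w where w: "w \<in> Z" "w \<in> A" by blast
    have "insert w A' \<in> M" using w by (intro indep_subset[OF Z(2)]) blast
    moreover have "w \<in> U - A'" using w Z(1) A unfolding basis_of_def by blast
    ultimately show False using A' unfolding basis_of_def by blast
  qed
  then have ZQ: "Z \<subseteq> Q" using Z(1) by blast
  have fQ: "finite Q" and fA: "finite A" using indep_finite[OF AQ] by simp_all
  have "card A + card Q = card (A \<union> Q)"
    using Q A fA fQ unfolding basis_of_def by (intro card_Un_disjoint[symmetric]) auto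
  also have "\<dots> \<le> card (A' \<union> Z)" by (rule Z(3))
  also have "\<dots> \<le> card A' + card Z" by (rule card_Un_le)
  finally have "card Q \<le> card Z" using basis_of_card_eq[OF A A'] by simp
  then have "Z = Q" using ZQ fQ card_seteq by blast
  then show ?thesis using Z(2) by simp
qed

lemma basis_of_extend:
  assumes "U' \<subseteq> U" and D': "basis_of U' D'" and B': "basis_of U' (B \<inter> U')"
    and B: "basis_of U B" and Q: "Q \<subseteq> B - U'"
  shows "\<exists>D. basis_of U D \<and> D' \<union> Q \<subseteq> D \<and> D \<inter> U' = D'"
proof -
  have BM: "B \<in> M" and BU: "B \<subseteq> U" using B unfolding basis_of_def by simp_all
  have "B \<inter> U' \<union> Q \<in> M" using Q by (intro indep_subset[OF BM]) blast
  then have D'Q: "D' \<union> Q \<in> M" using basis_of_Un_indep[OF B' D'] Q by blast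
  from augment_to_card[OF D'Q BM] obtain Z where
    Z: "Z \<subseteq> B" "D' \<union> Q \<union> Z \<in> M" "card B \<le> card (D' \<union> Q \<union> Z)"
    by blast
  define D where "D = D' \<union> Q \<union> Z"
  have "D' \<subseteq> U'" using D' unfolding basis_of_def by simp
  then have "D \<subseteq> U" using Z(1) Q BU \<open>U' \<subseteq> U\<close> unfolding D_def by blast
  then have "basis_of U D" using basis_of_if_card_ge[OF B] Z(2,3) unfolding D_def by simp
  moreover have "D \<inter> U' \<subseteq> D'"
  proof
    fix w assume w: "w \<in> D \<inter> U'"
    have "insert w D' \<in> M" using w unfolding D_def by (intro indep_subset[OF Z(2)]) blast
    then show "w \<in> D'" using D' w unfolding basis_of_def by blast
  qed
  ultimately show ?thesis using \<open>D' \<subseteq> U'\<close> unfolding D_def by blast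
qed

definition sublevel :: "(nat \<Rightarrow> nat) \<Rightarrow> nat \<Rightarrow> nat set" where
  "sublevel \<gamma> k = {x\<in>E. \<gamma> x \<le> k}"

definition min_weight_basis :: "(nat \<Rightarrow> nat) \<Rightarrow> nat set \<Rightarrow> bool" where
  "min_weight_basis \<gamma> B \<longleftrightarrow> B \<in> bases M \<and> (\<forall>F\<in>bases M. sum \<gamma> B \<le> sum \<gamma> F)"

lemma sublevel_mono: "j \<le> k \<Longrightarrow> sublevel \<gamma> j \<subseteq> sublevel \<gamma> k"
  unfolding sublevel_def by auto

lemma min_weight_basis_sublevel:
  assumes C: "min_weight_basis \<gamma> C"
  shows "basis_of (sublevel \<gamma> k) (C \<inter> sublevel \<gamma> k)"
  unfolding basis_of_def
proof (intro conjI ballI notI)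
  have CB: "C \<in> bases M" using C unfolding min_weight_basis_def by simp
  then have CM: "C \<in> M" and fC: "finite C" and CE: "C \<subseteq> E"
    using basis_indep indep_finite indep_subset_ground by auto
  show "C \<inter> sublevel \<gamma> k \<in> M" by (intro indep_subset[OF CM]) blast
  show "C \<inter> sublevel \<gamma> k \<subseteq> sublevel \<gamma> k" by blast
  fix w assume w: "w \<in> sublevel \<gamma> k - C \<inter> sublevel \<gamma> k"
    and wM: "insert w (C \<inter> sublevel \<gamma> k) \<in> M"
  have "w \<notin> C" "\<gamma> w \<le> k" using w unfolding sublevel_def by auto
  from basis_exchange[OF CB wM] obtain x where
    x: "x \<in> C - insert w (C \<inter> sublevel \<gamma> k)" "insert w (C - {x}) \<in> bases M"
    using \<open>w \<notin> C\<close> by blast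
  have "\<gamma> w < \<gamma> x" using x(1) CE \<open>\<gamma> w \<le> k\<close> unfolding sublevel_def by auto
  have "sum \<gamma> (insert w (C - {x})) = \<gamma> w + sum \<gamma> (C - {x})"
    using \<open>w \<notin> C\<close> fC by simp
  also have "\<dots> < \<gamma> x + sum \<gamma> (C - {x})" using \<open>\<gamma> w < \<gamma> x\<close> by simp
  also have "\<dots> = sum \<gamma> C" using x(1) by (intro sum.remove[OF fC, symmetric]) blast
  finally show False using C x(2) unfolding min_weight_basis_def by fastforce
qed

lemma exists_sublevel_compatible_basis:
  assumes X_level: "\<And>i. i \<le> k \<Longrightarrow> X i \<subseteq> {x\<in>E. \<gamma> x = i}"
    and X_min: "\<And>i. i \<le> k \<Longrightarrow> \<exists>B. min_weight_basis \<gamma> B \<and> X i \<subseteq> B"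
  shows "\<exists>D. D \<subseteq> sublevel \<gamma> k \<and> (\<forall>j\<le>k. basis_of (sublevel \<gamma> j) (D \<inter> sublevel \<gamma> j))
    \<and> (\<Union>i\<le>k. X i) \<subseteq> D"
  using assms
proof (induction k)
  case 0
  then obtain B where B: "min_weight_basis \<gamma> B" "X 0 \<subseteq> B" by blast
  have "X 0 \<subseteq> sublevel \<gamma> 0" using "0.prems"(1) unfolding sublevel_def by auto
  then show ?case using B min_weight_basis_sublevel[OF B(1), of 0]
    by (intro exI[of _ "B \<inter> sublevel \<gamma> 0"]) auto
next
  case (Suc k)
  then obtain D' where D': "D' \<subseteq> sublevel \<gamma> k"
      "\<forall>j\<le>k. basis_of (sublevel \<gamma> j) (D' \<inter> sublevel \<gamma> j)" "(\<Union>i\<le>k. X i) \<subseteq> D'"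
    by (metis le_SucI)
  from Suc.prems(2) obtain B where B: "min_weight_basis \<gamma> B" "X (Suc k) \<subseteq> B" by blast
  have mono: "sublevel \<gamma> k \<subseteq> sublevel \<gamma> (Suc k)" by (rule sublevel_mono) simp
  have "basis_of (sublevel \<gamma> k) D'" using D'(1,2) by (metis inf.absorb1 order_refl)
  moreover have "B \<inter> sublevel \<gamma> (Suc k) \<inter> sublevel \<gamma> k = B \<inter> sublevel \<gamma> k"
    using mono by blast
  then have "basis_of (sublevel \<gamma> k) (B \<inter> sublevel \<gamma> (Suc k) \<inter> sublevel \<gamma> k)"
    using min_weight_basis_sublevel[OF B(1)] by simp
  moreover have "X (Suc k) \<subseteq> B \<inter> sublevel \<gamma> (Suc k) - sublevel \<gamma> k"
    using B(2) Suc.prems(1)[of "Suc k"] unfolding sublevel_def by auto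
  ultimately obtain D where D: "basis_of (sublevel \<gamma> (Suc k)) D" "D' \<union> X (Suc k) \<subseteq> D"
      "D \<inter> sublevel \<gamma> k = D'"
    using basis_of_extend[OF mono _ _ min_weight_basis_sublevel[OF B(1)]] by blast
  have DS: "D \<subseteq> sublevel \<gamma> (Suc k)" using D(1) unfolding basis_of_def by simp
  have "basis_of (sublevel \<gamma> j) (D \<inter> sublevel \<gamma> j)" if "j \<le> Suc k" for j
  proof (cases "j = Suc k")
    case True
    then show ?thesis using D(1) DS by (simp add: Int_absorb2)
  next
    case False
    then have "D \<inter> sublevel \<gamma> j = D' \<inter> sublevel \<gamma> j"
      using D(3) sublevel_mono[of j k \<gamma>] that by auto
    then show ?thesis using D'(2) False that by simp
  qed
  moreover have "(\<Union>i\<le>Suc k. X i) \<subseteq> D"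
    using D(2) D'(3) by (auto simp: atMost_Suc)
  ultimately show ?case using DS by blast
qed

lemma sublevel_compatible_weight_eq:
  assumes B: "B \<in> bases M" and D: "D \<in> bases M" and bound: "\<forall>x\<in>E. \<gamma> x \<le> s"
    and B_comp: "\<And>j. j < s \<Longrightarrow> basis_of (sublevel \<gamma> j) (B \<inter> sublevel \<gamma> j)"
    and D_comp: "\<And>j. j < s \<Longrightarrow> basis_of (sublevel \<gamma> j) (D \<inter> sublevel \<gamma> j)"
  shows "sum \<gamma> B = sum \<gamma> D"
proof -
  have fin: "finite B" "finite D" and sub: "B \<subseteq> E" "D \<subseteq> E"
    using B D basis_indep indep_finite indep_subset_ground by auto
  have above: "{x\<in>A. j < \<gamma> x} = A - A \<inter> sublevel \<gamma> j" if "A \<subseteq> E" for A j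
    using that unfolding sublevel_def by auto
  have "card B = card D"
    using B D basis_of_card_eq unfolding bases_iff_basis_of by blast
  moreover have "card (B \<inter> sublevel \<gamma> j) = card (D \<inter> sublevel \<gamma> j)" if "j < s" for j
    using B_comp[OF that] D_comp[OF that] by (rule basis_of_card_eq)
  ultimately have levels: "card {x\<in>B. j < \<gamma> x} = card {x\<in>D. j < \<gamma> x}" if "j < s" for j
    using that fin by (simp add: above sub card_Diff_subset_Int)
  have "sum \<gamma> B = (\<Sum>j<s. card {x\<in>B. j < \<gamma> x})"
    using bound sub by (intro sum_eq_sum_card_less[OF fin(1)]) blast
  also have "\<dots> = (\<Sum>j<s. card {x\<in>D. j < \<gamma> x})"
    using levels by (intro sum.cong) auto
  also have "\<dots> = sum \<gamma> D"
    using bound sub by (intro sum_eq_sum_card_less[OF fin(2), symmetric]) blast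
  finally show ?thesis .
qed

lemma focal_subset_min_weight_basis:
  assumes cover: "\<forall>F\<in>bases M. l \<le> sum \<gamma> F" and I: "I \<in> focal M l \<gamma>"
  obtains B where "min_weight_basis \<gamma> B" "sum \<gamma> B = l" "I \<subseteq> B"
proof -
  from I obtain B where B: "B \<in> bases M" "sum \<gamma> B = l" "I \<subseteq> B" unfolding focal_def by blast
  then have "min_weight_basis \<gamma> B" using cover unfolding min_weight_basis_def by simp
  then show thesis using B(2,3) by (rule that)
qed

lemma focal_downward_closed: "I \<in> focal M l \<gamma> \<Longrightarrow> J \<subseteq> I \<Longrightarrow> J \<in> focal M l \<gamma>"
  unfolding focal_def by blast

lemma focal_subset_indeps: "focal M l \<gamma> \<subseteq> M"
  unfolding focal_def using basis_indep indep_subset by blast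

lemma focal_Union_levels:
  assumes cover: "\<forall>F\<in>bases M. l \<le> sum \<gamma> F" and bound: "\<forall>x\<in>E. \<gamma> x \<le> s"
    and X: "\<And>i. i \<le> s \<Longrightarrow> X i \<in> focal M l \<gamma> \<and> X i \<subseteq> {x\<in>E. \<gamma> x = i}"
  shows "(\<Union>i\<le>s. X i) \<in> focal M l \<gamma>"
proof -
  have "\<exists>B. min_weight_basis \<gamma> B \<and> X i \<subseteq> B" if "i \<le> s" for i
    using focal_subset_min_weight_basis[OF cover] X[OF that] by metis
  with X obtain D where D: "D \<subseteq> sublevel \<gamma> s"
      "\<forall>j\<le>s. basis_of (sublevel \<gamma> j) (D \<inter> sublevel \<gamma> j)" "(\<Union>i\<le>s. X i) \<subseteq> D"
    using exists_sublevel_compatible_basis[of s X \<gamma>] by blast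
  have "sublevel \<gamma> s = E" using bound unfolding sublevel_def by auto
  then have DB: "D \<in> bases M" using D(1,2) unfolding bases_iff_basis_of by (metis inf.absorb1 order_refl)
  obtain C where C: "min_weight_basis \<gamma> C" "sum \<gamma> C = l"
    using focal_subset_min_weight_basis[OF cover conjunct1[OF X[OF le0]]] by blast
  have "sum \<gamma> D = sum \<gamma> C"
  proof (rule sublevel_compatible_weight_eq[OF DB _ bound])
    show "C \<in> bases M" using C(1) unfolding min_weight_basis_def by simp
    show "basis_of (sublevel \<gamma> j) (D \<inter> sublevel \<gamma> j)" if "j < s" for j
      using D(2) that by simp
    show "basis_of (sublevel \<gamma> j) (C \<inter> sublevel \<gamma> j)" for j
      using min_weight_basis_sublevel[OF C(1)] .
  qed
  then show ?thesis using DB C(2) D(3) unfolding focal_def by auto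
qed

text \<open>Minimality of a basic cover forces some basis to attain the bound: otherwise lowering
  \<open>\<gamma>\<close> by one at a point of its support would still give a cover.\<close>
lemma basic_cover_focal_basis:
  assumes basic: "basic_cover n M l \<gamma>"
  obtains C where "C \<in> bases M" "sum \<gamma> C = l"
proof (rule ccontr)
  assume no_focal_basis: "\<not> thesis"
  have cov: "is_cover n M l \<gamma>" using basic unfolding basic_cover_def by blast
  have gt: "\<forall>F\<in>bases M. l < sum \<gamma> F"
  proof
    fix F assume F: "F \<in> bases M"
    then have "l \<le> sum \<gamma> F" using cov unfolding is_cover_def by blast
    moreover have "sum \<gamma> F \<noteq> l" using that F no_focal_basis by blast
    ultimately show "l < sum \<gamma> F" by simp
  qed
  obtain B where "B \<in> bases M" using exists_basis by blast
  have "\<not> (\<forall>i. \<gamma> i = 0)"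
  proof
    assume "\<forall>i. \<gamma> i = 0"
    then have "sum \<gamma> B = 0" by simp
    then show False using gt \<open>B \<in> bases M\<close> by auto
  qed
  then obtain i where i: "0 < \<gamma> i" by auto
  define \<delta> where "\<delta> = \<gamma>(i := \<gamma> i - 1)"
  have "l \<le> sum \<delta> F" if "F \<in> bases M" for F
  proof -
    have "l < sum \<gamma> F" using gt that by blast
    also have "\<dots> \<le> sum \<delta> F + 1"
      unfolding \<delta>_def using that basis_indep indep_finite by (intro sum_le_sum_decrement) blast
    finally show ?thesis by simp
  qed
  moreover have "\<forall>j. j \<notin> {1..n} \<longrightarrow> \<delta> j = 0" using cov unfolding is_cover_def \<delta>_def by simp
  ultimately have "is_cover n M l \<delta>" unfolding is_cover_def by blast
  moreover have "\<delta> \<le> \<gamma>" using i unfolding \<delta>_def le_fun_def by simp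
  moreover have "\<delta> \<noteq> \<gamma>" using i unfolding \<delta>_def by (metis fun_upd_same diff_less less_irrefl zero_less_one)
  ultimately show False using basic unfolding basic_cover_def by blast
qed

lemma bases_restr_focal_supp:
  assumes F: "F \<in> bases (restr (focal M l \<gamma>) (supp \<gamma>))"
  shows "F \<subseteq> supp \<gamma> \<and> sum \<gamma> F = l"
proof -
  have "F \<in> focal M l \<gamma>" and Fs: "F \<subseteq> supp \<gamma>"
    using F unfolding bases_def restr_def by auto
  then obtain C where C: "C \<in> bases M" "sum \<gamma> C = l" "F \<subseteq> C" unfolding focal_def by blast
  have "C \<inter> supp \<gamma> \<in> restr (focal M l \<gamma>) (supp \<gamma>)"
    using C(1,2) unfolding restr_def focal_def by blast
  moreover have "F \<subseteq> C \<inter> supp \<gamma>" using C(3) Fs by blast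
  ultimately have "C \<inter> supp \<gamma> = F" using F unfolding bases_def by blast
  moreover have "finite C" using C(1) by (intro indep_finite basis_indep)
  then have "sum \<gamma> (C \<inter> supp \<gamma>) = sum \<gamma> C"
    by (intro sum.mono_neutral_left) (auto simp: supp_def)
  ultimately show ?thesis using Fs C(2) by simp
qed

lemma restr_focal_levels_eq_dsum:
  assumes cover: "\<forall>F\<in>bases M. l \<le> sum \<gamma> F" and bound: "\<forall>x\<in>E. \<gamma> x \<le> s"
    and focal_basis: "\<exists>C\<in>bases M. sum \<gamma> C = l" and "K \<subseteq> {0..s}"
  shows "restr (focal M l \<gamma>) (\<Union>i\<in>K. {x\<in>E. \<gamma> x = i})
    = dsum K (\<lambda>i. restr (focal M l \<gamma>) {x\<in>E. \<gamma> x = i})"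
proof (rule restr_UN_eq_dsum[where K = "{0..s}"])
  show "(\<Union>i\<in>{0..s}. X i) \<in> focal M l \<gamma>"
    if "\<forall>i\<in>{0..s}. X i \<in> focal M l \<gamma> \<and> X i \<subseteq> {x\<in>E. \<gamma> x = i}" for X
    using focal_Union_levels[OF cover bound] that unfolding atLeast0AtMost by blast
  show "J \<in> focal M l \<gamma>" if "I \<in> focal M l \<gamma>" "J \<subseteq> I" for I J
    using that by (rule focal_downward_closed)
  show "{} \<in> focal M l \<gamma>" using focal_basis unfolding focal_def by blast
qed fact

end

lemma standard_form_nth:
  assumes sf: "standard_form n \<gamma> As" and j: "j < length As"
  shows "As ! j = {x\<in>{1..n}. j < \<gamma> x}"
proof -
  have "x \<in> As ! j \<longleftrightarrow> j < \<gamma> x" for x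
  proof -
    let ?J = "{i. i < length As \<and> x \<in> As ! i}"
    have "?J = {..<card ?J}"
      using sf unfolding standard_form_def
      by (intro downward_closed_eq_lessThan_card) (auto, metis le_neq_implies_less subsetD)
    moreover have "\<gamma> x = card ?J" using sf unfolding standard_form_def by blast
    ultimately show ?thesis using j by (metis (no_types, lifting) lessThan_iff mem_Collect_eq)
  qed
  moreover have "As ! j \<subseteq> {1..n}" using sf j unfolding standard_form_def by (meson nth_mem)
  ultimately show ?thesis by blast
qed

lemma standard_form_bound:
  assumes "standard_form n \<gamma> As"
  shows "\<gamma> x \<le> length As"
proof -
  have "card {i. i < length As \<and> x \<in> As ! i} \<le> card {..<length As}" by (intro card_mono) auto
  then show ?thesis using assms unfolding standard_form_def by simp
qed

lemma standard_form_layers: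
  assumes "standard_form n \<gamma> As"
  shows "(if i = 0 then {1..n} else if i \<le> length As then As ! (i - 1) else {})
    = {x\<in>{1..n}. i \<le> \<gamma> x}"
proof -
  consider "i = 0" | "0 < i" "i \<le> length As" | "length As < i" by linarith
  then show ?thesis
  proof cases
    case 2
    then show ?thesis using standard_form_nth[OF assms, of "i - 1"] by auto
  next
    case 3
    then have "\<gamma> x < i" for x using standard_form_bound[OF assms, of x] by linarith
    then show ?thesis using 3 by (auto dest: leD)
  qed auto
qed

theorem theorem3p7:
  fixes n l :: nat and \<gamma> :: "nat \<Rightarrow> nat" and M :: "nat set set" and As :: "nat set list"
  assumes "matroid {1..n} M"
    and "basic_cover n M l \<gamma>"
    and "standard_form n \<gamma> As"
  defines "s \<equiv> length As"
    and "S \<equiv> (\<lambda>i. if i = 0 then {1..n} else if i \<le> length As then As ! (i - 1) else {})"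
    and "M0 \<equiv> restr (focal M l \<gamma>) ({1..n} - supp \<gamma>)"
    and "Mp \<equiv> restr (focal M l \<gamma>) (supp \<gamma>)"
  shows "focal M l \<gamma> = dsum {0..s} (\<lambda>i. restr (focal M l \<gamma>) (S i - S (Suc i)))
    \<and> focal M l \<gamma> = dsum2 M0 Mp
    \<and> Mp = dsum {1..s} (\<lambda>i. restr (focal M l \<gamma>) (S i - S (Suc i)))
    \<and> (\<forall>F\<in>bases Mp. F \<subseteq> supp \<gamma> \<and> sum \<gamma> F = l)
    \<and> (\<forall>G\<in>bases M0. sum \<gamma> G = 0)"
proof -
  interpret matroid_on "{1..n}" M by (rule matroid_on.intro) (rule assms(1))
  define L where "L i = {x\<in>{1..n}. \<gamma> x = i}" for i
  have cover: "is_cover n M l \<gamma>" using assms(2) unfolding basic_cover_def by blast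
  have bound: "\<gamma> x \<le> s" for x using standard_form_bound[OF assms(3)] unfolding s_def .
  have "S i = {x\<in>{1..n}. i \<le> \<gamma> x}" for i
    unfolding S_def by (rule standard_form_layers[OF assms(3)])
  then have layers: "S i - S (Suc i) = L i" for i unfolding L_def by auto
  have ground: "{1..n} = (\<Union>i\<in>{0..s}. L i)" and supp: "supp \<gamma> = (\<Union>i\<in>{1..s}. L i)"
    and compl: "{1..n} - supp \<gamma> = L 0"
    using bound cover unfolding L_def supp_def is_cover_def by (auto simp: Suc_le_eq)
  obtain C where "C \<in> bases M" "sum \<gamma> C = l" using basic_cover_focal_basis[OF assms(2)] .
  then have decomp: "restr (focal M l \<gamma>) (\<Union>i\<in>K. L i) = dsum K (\<lambda>i. restr (focal M l \<gamma>) (L i))"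
    if "K \<subseteq> {0..s}" for K
    using restr_focal_levels_eq_dsum[OF _ _ _ that] cover bound unfolding L_def is_cover_def by blast
  have "restr (focal M l \<gamma>) {1..n} = focal M l \<gamma>"
    using focal_subset_indeps indep_subset_ground unfolding restr_def by blast
  then have sum_all: "focal M l \<gamma> = dsum {0..s} (\<lambda>i. restr (focal M l \<gamma>) (L i))"
    using decomp[of "{0..s}"] ground by simp
  have sum_pos: "Mp = dsum {1..s} (\<lambda>i. restr (focal M l \<gamma>) (L i))"
    using decomp[of "{1..s}"] supp unfolding Mp_def by auto
  have "focal M l \<gamma> = dsum2 M0 Mp"
    using sum_all sum_pos dsum_insert[of 0 "{1..s}"] compl
    unfolding M0_def by (simp add: atLeastAtMost_insertL)
  then show ?thesis
    unfolding layers using sum_all sum_pos bases_restr_focal_supp bases_restr_compl_supp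
    unfolding Mp_def M0_def by blast
qed

end
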